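(* Let $r,K,\alpha,\phi,c,m_1,m_2,\lambda,a,d,\delta,\gamma,\sigma,\eta$ be positive constants with $\phi<1$ and $m_1>m_2$, and consider the system \[ \begin{cases} \dot X = rX\left(1-\frac{X}{K}\right)-\frac{\alpha XS}{c+X}-\frac{\phi\alpha XI}{c+X},\\[1mm] \dot S = \frac{m_1\alpha XS}{c+X}-\frac{\lambda AS}{a+A}-dS,\\[1mm] \dot I = \frac{m_2\phi\alpha XI}{c+X}+\frac{\lambda AS}{a+A}-(d+\delta)I,\\[1mm] \dot A = \gamma+\sigma(S+I)-\eta A. \end{cases} \] Assume $d+\delta<\frac{m_2\phi\alpha K}{c+K}$, and let $E_2=(\bar X,0,\bar I,\bar A)$ be the susceptible-pest-free equilibrium, where \[ \bar X=\frac{c(d+\delta)}{m_2\phi\alpha-(d+\delta)},\qquad \bar I=\frac{r(c+\bar X)(K-\bar X)}{\phi\alpha K},\qquad \bar A=\frac{\gamma+\sigma\bar I}{\eta}. \] Then $E_2$ is locally asymptotically stable if \[ \frac{m_1(d+\delta)(a+\bar A)}{(a+\bar A)(\lambda+d)-\lambda a}<m_2\phi<\frac{(K+c)(d+\delta)}{\alpha(K-c)}. \]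
   Context: The assumption $d+\delta<\frac{m_2\phi\alpha K}{c+K}$ is the paper's condition for existence of $E_2$ (equivalently $0<\bar X<K$). *)

theory Defs
  imports "HOL-Analysis.Analysis"
begin

type_synonym state = "real \<times> real \<times> real \<times> real"

definition pest_field ::
  "real \<Rightarrow> real \<Rightarrow> real \<Rightarrow> real \<Rightarrow> real \<Rightarrow> real \<Rightarrow> real \<Rightarrow> real \<Rightarrow> real \<Rightarrow>
   real \<Rightarrow> real \<Rightarrow> real \<Rightarrow> real \<Rightarrow> real \<Rightarrow> state \<Rightarrow> state" where
  "pest_field r K \<alpha> \<phi> c m1 m2 lam a d \<delta> \<gamma> \<sigma> \<eta> =
     (\<lambda>(X, S, I, A).
       (r * X * (1 - X / K) - \<alpha> * X * S / (c + X) - \<phi> * \<alpha> * X * I / (c + X),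
        m1 * \<alpha> * X * S / (c + X) - lam * A * S / (a + A) - d * S,
        m2 * \<phi> * \<alpha> * X * I / (c + X) + lam * A * S / (a + A) - (d + \<delta>) * I,
        \<gamma> + \<sigma> * (S + I) - \<eta> * A))"

definition is_solution :: "(state \<Rightarrow> state) \<Rightarrow> (real \<Rightarrow> state) \<Rightarrow> bool" where
  "is_solution F x \<longleftrightarrow>
     (\<forall>t\<ge>0. (x has_vector_derivative F (x t)) (at t within {0..}))"

definition loc_asym_stable :: "(state \<Rightarrow> state) \<Rightarrow> state \<Rightarrow> bool" where
  "loc_asym_stable F e \<longleftrightarrow>
     F e = 0 \<and>
     (\<forall>\<epsilon>>0. \<exists>\<delta>>0. \<forall>x. is_solution F x \<and> dist (x 0) e < \<delta> \<longrightarrow>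
        (\<forall>t\<ge>0. dist (x t) e < \<epsilon>)) \<and>
     (\<exists>\<delta>>0. \<forall>x. is_solution F x \<and> dist (x 0) e < \<delta> \<longrightarrow> (x \<longlongrightarrow> e) at_top)"

end

(*
  Lyapunov's indirect method. In the deviation coordinates (x, s, i, a) from E2 the
  Jacobian has the form
    x' = p x + g s - q i,   s' = \<mu> s,   i' = w x + h s,   a' = \<sigma> (s + i) - \<eta> a
  with q, w > 0, where the upper bound on m2 \<phi> gives p < 0 and the lower bound gives \<mu> < 0.
  The quadratic form  w x^2 + 2 \<beta> x i + q i^2 + k s^2 + \<epsilon> a^2  (\<beta>, \<epsilon> small, k large) then
  decreases at rate -\<kappa> |y|^2 along the linearisation. As the nonlinear remainder is o(|y|),
  it still decreases along solutions near E2: its sublevel sets are invariant (stability)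
  and it decays exponentially (attractivity).
*)
theory Submission
  imports Defs "HOL-Real_Asymp.Real_Asymp"
begin

lemma norm_state_squared: "(norm (x :: real, s :: real, i :: real, a :: real))^2 = x^2 + s^2 + i^2 + a^2"
  unfolding power2_norm_eq_inner by (simp add: power2_eq_square)

lemma is_solution_has_vector_derivative_at:
  assumes "is_solution F x" and "t > 0"
  shows "(x has_vector_derivative F (x t)) (at t)"
proof -
  have "(x has_vector_derivative F (x t)) (at t within {0..})"
    using assms unfolding is_solution_def by simp
  then have "(x has_vector_derivative F (x t)) (at t within {0<..})"
    by (rule has_vector_derivative_within_subset) auto
  then show ?thesis
    using assms(2) at_within_open[of t "{0<..}"] by auto
qed

lemma is_solution_continuous_on:
  assumes "is_solution F x"
  shows "continuous_on {0..} x"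
  using assms unfolding is_solution_def continuous_on_eq_continuous_within
  by (auto intro: has_vector_derivative_continuous)

lemma stays_below_level:
  fixes g :: "real \<Rightarrow> real"
  assumes cont: "continuous_on {0..} g" and start: "g 0 < c"
    and nonincreasing: "\<And>t. 0 < t \<Longrightarrow> g t < c \<Longrightarrow> \<exists>D. (g has_real_derivative D) (at t) \<and> D \<le> 0"
    and "t \<ge> 0"
  shows "g t < c"
proof (rule ccontr)
  assume "\<not> g t < c"
  define S where "S = {0..t} \<inter> g -` {c..}"
  define T where "T = Inf S"
  have "closed S"
    unfolding S_def using continuous_on_subset[OF cont]
    by (intro continuous_closed_preimage) auto
  moreover have "t \<in> S" using \<open>\<not> g t < c\<close> \<open>t \<ge> 0\<close> by (auto simp: S_def)
  moreover have "bdd_below S" unfolding S_def by (rule bdd_belowI[of _ 0]) auto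
  ultimately have "T \<in> S" and first: "\<And>u. u \<in> S \<Longrightarrow> T \<le> u"
    unfolding T_def by (auto intro: closed_contains_Inf cInf_lower)
  then have T: "0 \<le> T" "T \<le> t" "c \<le> g T" by (auto simp: S_def)
  have "g T \<le> g 0"
  proof (rule DERIV_nonpos_imp_decreasing_open[OF \<open>0 \<le> T\<close>])
    fix u assume "0 < u" "u < T"
    moreover from this have "u \<notin> S" using first by force
    ultimately show "\<exists>D. (g has_real_derivative D) (at u) \<and> D \<le> 0"
      using nonincreasing T by (auto simp: S_def)
  qed (use continuous_on_subset[OF cont] in auto)
  then show False using start T by linarith
qed

lemma exponential_decay:
  fixes g g' :: "real \<Rightarrow> real"
  assumes cont: "continuous_on {0..} g"
    and deriv: "\<And>t. 0 < t \<Longrightarrow> (g has_real_derivative g' t) (at t)"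
    and decay: "\<And>t. 0 < t \<Longrightarrow> g' t \<le> - k * g t"
    and "t \<ge> 0"
  shows "g t \<le> g 0 * exp (- k * t)"
proof -
  have "g t * exp (k * t) \<le> g 0 * exp (k * 0)"
  proof (rule DERIV_nonpos_imp_decreasing_open[OF \<open>t \<ge> 0\<close>])
    fix u :: real assume "0 < u"
    then have "((\<lambda>t. g t * exp (k * t)) has_real_derivative (g' u + k * g u) * exp (k * u)) (at u)"
      by (auto intro!: derivative_eq_intros deriv simp: algebra_simps)
    moreover have "(g' u + k * g u) * exp (k * u) \<le> 0"
      using decay[OF \<open>0 < u\<close>] by (simp add: mult_nonpos_nonneg)
    ultimately show "\<exists>D. ((\<lambda>t. g t * exp (k * t)) has_real_derivative D) (at u) \<and> D \<le> 0"
      by blast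
  qed (use continuous_on_subset[OF cont] in \<open>auto intro!: continuous_intros\<close>)
  then show ?thesis by (simp add: exp_minus field_simps)
qed

locale quadratic_lyapunov =
  fixes F P :: "state \<Rightarrow> state" and e :: state and m M \<kappa> \<rho> :: real
  assumes equilibrium: "F e = 0"
    and linear_P: "linear P"
    and P_symmetric: "\<And>y v. inner (P y) v = inner y (P v)"
    and m_pos: "m > 0"
    and lower_bound: "\<And>y. m * (norm y)^2 \<le> inner y (P y)"
    and upper_bound: "\<And>y. inner y (P y) \<le> M * (norm y)^2"
    and \<kappa>_pos: "\<kappa> > 0"
    and \<rho>_pos: "\<rho> > 0"
    and decrease: "\<And>y. norm y < \<rho> \<Longrightarrow> inner (P y) (F (e + y)) \<le> - \<kappa> * (norm y)^2"
begin

definition V :: "state \<Rightarrow> real" where "V y = inner y (P y)"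

lemma M_pos: "M > 0"
proof -
  have "m \<le> M"
    using lower_bound[of "(1, 0, 0, 0)"] upper_bound[of "(1, 0, 0, 0)"]
    by (simp add: norm_state_squared)
  then show ?thesis using m_pos by simp
qed

lemma V_has_derivative: "(V has_derivative (\<lambda>v. 2 * inner (P y) v)) (at y)"
proof -
  have "(V has_derivative (\<lambda>v. inner v (P y) + inner y (P v))) (at y)"
    unfolding V_def[abs_def]
    by (auto intro!: derivative_eq_intros linear_imp_has_derivative[OF linear_P])
  then show ?thesis
    by (rule has_derivative_eq_rhs) (simp add: fun_eq_iff P_symmetric inner_commute)
qed

lemma V_along_solution:
  assumes "is_solution F x" and "t > 0"
  shows "((\<lambda>t. V (x t - e)) has_real_derivative 2 * inner (P (x t - e)) (F (x t))) (at t)"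
proof -
  have "((\<lambda>t. x t - e) has_derivative (\<lambda>h. h *\<^sub>R F (x t))) (at t)"
    using is_solution_has_vector_derivative_at[OF assms]
    unfolding has_vector_derivative_def by (auto intro!: derivative_eq_intros)
  from has_derivative_compose[OF this V_has_derivative[of "x t - e"]] show ?thesis
    unfolding has_field_derivative_def
    by (rule has_derivative_eq_rhs) (simp add: fun_eq_iff)
qed

lemma V_continuous_along_solution:
  assumes "is_solution F x"
  shows "continuous_on {0..} (\<lambda>t. V (x t - e))"
proof -
  have "continuous_on UNIV V"
    using V_has_derivative by (meson continuous_at_imp_continuous_on has_derivative_continuous)
  moreover have "continuous_on {0..} (\<lambda>t. x t - e)"
    using is_solution_continuous_on[OF assms] by (intro continuous_intros)
  ultimately show ?thesis by (rule continuous_on_compose2) auto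
qed

lemma norm_less_if_V_less:
  assumes "V y < m * r^2" and "r \<ge> 0"
  shows "norm y < r"
proof -
  have "m * (norm y)^2 < m * r^2" using lower_bound[of y] assms(1) by (simp add: V_def)
  then have "(norm y)^2 < r^2" using m_pos by simp
  then show ?thesis using assms(2) by (simp add: power_less_imp_less_base)
qed

lemma V_less_if_norm_less:
  assumes "norm y < r * sqrt (m / M)"
  shows "V y < m * r^2"
proof -
  have "0 < r * sqrt (m / M)" using assms norm_ge_zero[of y] by linarith
  then have "(norm y)^2 < (r * sqrt (m / M))^2" using assms by (intro power_strict_mono) auto
  also have "\<dots> = r^2 * m / M" using m_pos M_pos by (simp add: power_mult_distrib)
  finally have "M * (norm y)^2 < m * r^2" using M_pos by (simp add: field_simps)
  then show ?thesis using upper_bound[of y] by (simp add: V_def)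
qed

lemma solution_stays_in_ball:
  assumes sol: "is_solution F x" and "r \<le> \<rho>" and start: "norm (x 0 - e) < r * sqrt (m / M)"
    and "t \<ge> 0"
  shows "norm (x t - e) < r"
proof -
  have "0 < r * sqrt (m / M)" using start norm_ge_zero[of "x 0 - e"] by linarith
  moreover have "sqrt (m / M) > 0" using m_pos M_pos by simp
  ultimately have "r > 0" by (simp add: zero_less_mult_iff)
  have "V (x t - e) < m * r^2"
  proof (rule stays_below_level[OF V_continuous_along_solution[OF sol]])
    show "V (x 0 - e) < m * r^2" using V_less_if_norm_less[OF start] .
    fix u :: real assume "0 < u" and "V (x u - e) < m * r^2"
    then have "norm (x u - e) < r" using norm_less_if_V_less \<open>r > 0\<close> by simp
    then have "norm (x u - e) < \<rho>" using \<open>r \<le> \<rho>\<close> by simp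
    moreover have "0 \<le> \<kappa> * (norm (x u - e))^2" using \<kappa>_pos by simp
    ultimately have "2 * inner (P (x u - e)) (F (x u)) \<le> 0"
      using decrease[of "x u - e"] by simp
    then show "\<exists>D. ((\<lambda>t. V (x t - e)) has_real_derivative D) (at u) \<and> D \<le> 0"
      using V_along_solution[OF sol \<open>0 < u\<close>] by blast
  qed fact
  then show ?thesis using norm_less_if_V_less \<open>r > 0\<close> by simp
qed

lemma solution_tendsto_equilibrium:
  assumes sol: "is_solution F x" and start: "norm (x 0 - e) < \<rho> * sqrt (m / M)"
  shows "(x \<longlongrightarrow> e) at_top"
proof -
  define k where "k = 2 * \<kappa> / M"
  have "k > 0" using \<kappa>_pos M_pos by (simp add: k_def)
  have V_decay: "V (x t - e) \<le> V (x 0 - e) * exp (- k * t)" if "t \<ge> 0" for t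
  proof (rule exponential_decay[OF V_continuous_along_solution[OF sol] V_along_solution[OF sol] _ that])
    fix u :: real assume "0 < u"
    then have "norm (x u - e) < \<rho>" using solution_stays_in_ball[OF sol order.refl start] by simp
    then have "2 * inner (P (x u - e)) (F (x u)) \<le> - 2 * \<kappa> * (norm (x u - e))^2"
      using decrease[of "x u - e"] by simp
    also have "\<dots> \<le> - k * V (x u - e)"
      using upper_bound[of "x u - e"] \<open>k > 0\<close> M_pos by (simp add: V_def k_def field_simps)
    finally show "2 * inner (P (x u - e)) (F (x u)) \<le> - k * V (x u - e)" .
  qed
  have bound: "norm (x t - e) \<le> sqrt (V (x 0 - e) / m * exp (- k * t))" if "t \<ge> 0" for t
  proof -
    have "m * (norm (x t - e))^2 \<le> V (x 0 - e) * exp (- k * t)"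
      using lower_bound[of "x t - e"] V_decay[OF that] by (simp add: V_def)
    then have "(norm (x t - e))^2 \<le> V (x 0 - e) / m * exp (- k * t)"
      using m_pos by (simp add: field_simps)
    then show ?thesis by (simp add: real_le_rsqrt)
  qed
  have "((\<lambda>t. exp (- k * t)) \<longlongrightarrow> 0) at_top" using \<open>k > 0\<close> by real_asymp
  then have "((\<lambda>t. sqrt (V (x 0 - e) / m * exp (- k * t))) \<longlongrightarrow> sqrt (V (x 0 - e) / m * 0)) at_top"
    by (intro tendsto_intros)
  then have "((\<lambda>t. sqrt (V (x 0 - e) / m * exp (- k * t))) \<longlongrightarrow> 0) at_top"
    by simp
  then have "((\<lambda>t. x t - e) \<longlongrightarrow> 0) at_top"
    by (rule Lim_null_comparison[rotated]) (use bound in \<open>auto simp: eventually_at_top_linorder\<close>)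
  then show ?thesis by (simp add: LIM_zero_iff)
qed

theorem loc_asym_stable: "loc_asym_stable F e"
  unfolding loc_asym_stable_def
proof (intro conjI allI impI)
  show "F e = 0" by (rule equilibrium)
next
  fix \<epsilon> :: real assume "\<epsilon> > 0"
  define r where "r = min \<epsilon> \<rho>"
  show "\<exists>\<delta>>0. \<forall>x. is_solution F x \<and> dist (x 0) e < \<delta> \<longrightarrow> (\<forall>t\<ge>0. dist (x t) e < \<epsilon>)"
  proof (intro exI conjI allI impI)
    show "r * sqrt (m / M) > 0" using \<open>\<epsilon> > 0\<close> \<rho>_pos m_pos M_pos by (simp add: r_def)
    fix x and t :: real
    assume "is_solution F x \<and> dist (x 0) e < r * sqrt (m / M)" and "t \<ge> 0"
    then have "norm (x t - e) < r"
      using solution_stays_in_ball[of x r t] by (simp add: r_def dist_norm)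
    then show "dist (x t) e < \<epsilon>" by (simp add: r_def dist_norm)
  qed
next
  show "\<exists>\<delta>>0. \<forall>x. is_solution F x \<and> dist (x 0) e < \<delta> \<longrightarrow> (x \<longlongrightarrow> e) at_top"
    using solution_tendsto_equilibrium \<rho>_pos m_pos M_pos
    by (intro exI[of _ "\<rho> * sqrt (m / M)"]) (auto simp: dist_norm)
qed

end

lemma loc_asym_stable_by_linearization:
  fixes F L P :: "state \<Rightarrow> state"
  assumes "F e = 0" and linearization: "(F has_derivative L) (at e)"
    and "linear P" and "\<And>y v. inner (P y) v = inner y (P v)"
    and "m > 0" and "\<And>y. m * (norm y)^2 \<le> inner y (P y)"
    and "\<kappa> > 0" and lyapunov: "\<And>y. inner (P y) (L y) \<le> - \<kappa> * (norm y)^2"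
  shows "loc_asym_stable F e"
proof -
  obtain B where "B > 0" and P_bound: "\<And>y. norm (P y) \<le> B * norm y"
    using linear_bounded_pos[OF \<open>linear P\<close>] by blast
  have upper: "inner y (P y) \<le> B * (norm y)^2" for y
    using norm_cauchy_schwarz[of y "P y"] mult_left_mono[OF P_bound[of y] norm_ge_zero[of y]]
    by (simp add: power2_eq_square mult_ac)
  have "\<kappa> / (2 * B) > 0" using \<open>\<kappa> > 0\<close> \<open>B > 0\<close> by simp
  then obtain \<rho> where "\<rho> > 0"
    and remainder: "\<And>y. norm y < \<rho> \<Longrightarrow> norm (F (e + y) - L y) \<le> \<kappa> / (2 * B) * norm y"
    using linearization \<open>F e = 0\<close> unfolding has_derivative_within_alt
    by (metis UNIV_I add_diff_cancel_left' diff_zero)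
  have decrease: "inner (P y) (F (e + y)) \<le> - (\<kappa> / 2) * (norm y)^2" if "norm y < \<rho>" for y
  proof -
    have "inner (P y) (F (e + y) - L y) \<le> norm (P y) * norm (F (e + y) - L y)"
      by (rule norm_cauchy_schwarz)
    also have "\<dots> \<le> (B * norm y) * (\<kappa> / (2 * B) * norm y)"
      using P_bound remainder[OF that] \<open>B > 0\<close> by (intro mult_mono) auto
    also have "\<dots> = (\<kappa> / 2) * (norm y)^2" using \<open>B > 0\<close> by (simp add: power2_eq_square)
    finally show ?thesis using lyapunov[of y] by (simp add: inner_diff_right)
  qed
  interpret quadratic_lyapunov F P e m B "\<kappa> / 2" \<rho>
    using assms upper decrease \<open>\<rho> > 0\<close> by (intro quadratic_lyapunov.intro) simp_all
  show ?thesis by (rule loc_asym_stable)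
qed

text \<open>The entry of i in the i-component vanishes since infected growth and death balance at E2.\<close>
definition E2_jacobian :: "real \<Rightarrow> real \<Rightarrow> real \<Rightarrow> real \<Rightarrow> real \<Rightarrow> real \<Rightarrow> real \<Rightarrow> real \<Rightarrow> state \<Rightarrow> state"
  where "E2_jacobian p g q \<mu> w h \<sigma> \<eta> =
    (\<lambda>(x, s, i, a). (p * x + g * s - q * i, \<mu> * s, w * x + h * s, \<sigma> * (s + i) - \<eta> * a))"

text \<open>The weights w and q cancel the x-i coupling of the Jacobian; \<beta> > 0 makes i^2 decrease.\<close>
definition E2_lyapunov_map :: "real \<Rightarrow> real \<Rightarrow> real \<Rightarrow> real \<Rightarrow> real \<Rightarrow> state \<Rightarrow> state"
  where "E2_lyapunov_map w \<beta> q k \<epsilon> = (\<lambda>(x, s, i, a). (w * x + \<beta> * i, k * s, \<beta> * x + q * i, \<epsilon> * a))"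

lemma product_le_weighted_squares:
  fixes t u v :: real
  assumes "t > 0"
  shows "u * v \<le> (t * u^2 + v^2 / t) / 2"
proof -
  have "0 \<le> (t * u - v)^2 / t" using assms by simp
  also have "(t * u - v)^2 / t = t * u^2 + v^2 / t - 2 * (u * v)"
    using assms by (simp add: power2_eq_square field_simps)
  finally show ?thesis by simp
qed

lemma linear_E2_lyapunov_map: "linear (E2_lyapunov_map w \<beta> q k \<epsilon>)"
  by (rule linearI) (auto simp: E2_lyapunov_map_def split_beta algebra_simps)

lemma E2_lyapunov_map_symmetric:
  "inner (E2_lyapunov_map w \<beta> q k \<epsilon> y) v = inner y (E2_lyapunov_map w \<beta> q k \<epsilon> v)"
  by (cases y rule: prod_cases4; cases v rule: prod_cases4) (simp add: E2_lyapunov_map_def algebra_simps)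

lemma E2_lyapunov_map_coercive:
  assumes "w > 0" and "q > 0" and "k > 0" and "\<epsilon> > 0" and "\<beta>^2 \<le> w * q / 4"
  shows "min (min (w / 2) (q / 2)) (min k \<epsilon>) * (norm y)^2 \<le> inner y (E2_lyapunov_map w \<beta> q k \<epsilon> y)"
proof (cases y rule: prod_cases4)
  case (fields x s i a)
  define m where "m = min (min (w / 2) (q / 2)) (min k \<epsilon>)"
  have "- (x * (\<beta> * i)) \<le> (w / 2 * x^2 + (\<beta> * i)^2 / (w / 2)) / 2"
    using product_le_weighted_squares[of "w / 2" "- x" "\<beta> * i"] \<open>w > 0\<close> by simp
  also have "(\<beta> * i)^2 / (w / 2) \<le> q / 2 * i^2"
    using \<open>w > 0\<close> mult_right_mono[OF assms(5), of "i^2"] by (simp add: power_mult_distrib field_simps)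
  finally have cross: "- (2 * \<beta> * x * i) \<le> w / 2 * x^2 + q / 2 * i^2" by (simp add: algebra_simps)
  have "m * x^2 \<le> w / 2 * x^2" "m * i^2 \<le> q / 2 * i^2" "m * s^2 \<le> k * s^2" "m * a^2 \<le> \<epsilon> * a^2"
    by (intro mult_right_mono; simp add: m_def)+
  with cross show ?thesis
    unfolding fields m_def[symmetric] norm_state_squared
    by (simp add: E2_lyapunov_map_def power2_eq_square algebra_simps)
qed

lemma inner_E2_lyapunov_map_E2_jacobian:
  "inner (E2_lyapunov_map w \<beta> q k \<epsilon> (x, s, i, a)) (E2_jacobian p g q \<mu> w h \<sigma> \<eta> (x, s, i, a)) =
    w * (p + \<beta>) * x^2 + x * (\<beta> * p * i) - \<beta> * q * i^2
    + x * ((w * g + \<beta> * h) * s) + i * ((\<beta> * g + q * h) * s) + k * \<mu> * s^2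
    + a * (\<epsilon> * \<sigma> * s) + i * (\<epsilon> * \<sigma> * a) - \<epsilon> * \<eta> * a^2"
  by (simp add: E2_lyapunov_map_def E2_jacobian_def power2_eq_square algebra_simps)

lemma E2_lyapunov_weight:
  fixes p q w :: real
  assumes "p < 0" and "q > 0" and "w > 0"
  obtains \<beta> where "\<beta> > 0" and "\<beta> \<le> - p / 2" and "\<beta> * (- p) \<le> q * w / 2" and "\<beta>^2 \<le> w * q / 4"
proof
  define \<beta> where "\<beta> = min (- p / 2) (q * w / (- 2 * p))"
  have "q * w / (- 2 * p) > 0" using assms by (intro divide_pos_pos) auto
  then show "\<beta> > 0" using \<open>p < 0\<close> by (simp add: \<beta>_def)
  show "\<beta> \<le> - p / 2" by (simp add: \<beta>_def)
  have "\<beta> * (- p) \<le> q * w / (- 2 * p) * (- p)"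
    using \<open>p < 0\<close> by (intro mult_right_mono) (auto simp: \<beta>_def)
  then show "\<beta> * (- p) \<le> q * w / 2" using \<open>p < 0\<close> by simp
  have "\<beta>^2 \<le> (- p / 2) * (q * w / (- 2 * p))"
    unfolding power2_eq_square using \<open>\<beta> > 0\<close> by (intro mult_mono) (auto simp: \<beta>_def)
  then show "\<beta>^2 \<le> w * q / 4" using \<open>p < 0\<close> by (simp add: field_simps)
qed

lemma E2_prey_infected_block_bound:
  fixes p q w \<beta> x i :: real
  assumes "p < 0" and "w > 0" and "\<beta> > 0" and "\<beta> \<le> - p / 2" and "\<beta> * (- p) \<le> q * w / 2"
  shows "w * (p + \<beta>) * x^2 + x * (\<beta> * p * i) - \<beta> * q * i^2 \<le> w * p / 4 * x^2 - \<beta> * q / 2 * i^2"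
proof -
  have "w * (p + \<beta>) \<le> w * (p / 2)"
    using assms(2,4) by (intro mult_left_mono) auto
  then have diagonal: "w * (p + \<beta>) * x^2 \<le> w * p / 2 * x^2"
    by (intro mult_right_mono) auto
  have "x * (\<beta> * p * i) \<le> (- w * p / 2 * x^2 + (\<beta> * p * i)^2 / (- w * p / 2)) / 2"
    using assms(1,2) by (intro product_le_weighted_squares) (simp add: mult_pos_neg)
  also have "(\<beta> * p * i)^2 / (- w * p / 2) = 2 * (\<beta> * (- p)) * (\<beta> * i^2 / w)"
    using assms(1,2) by (simp add: power2_eq_square field_simps)
  also have "\<dots> \<le> 2 * (q * w / 2) * (\<beta> * i^2 / w)"
    using assms(2,3,5) by (intro mult_right_mono) auto
  finally have "x * (\<beta> * p * i) \<le> - w * p / 4 * x^2 + \<beta> * q / 2 * i^2"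
    using assms(2) by (simp add: field_simps)
  with diagonal show ?thesis by (simp add: algebra_simps)
qed

lemma E2_jacobian_lyapunov_estimate:
  fixes p g q \<mu> w h \<sigma> \<eta> \<beta> :: real
  assumes "p < 0" and "q > 0" and "w > 0" and "\<mu> < 0" and "\<sigma> > 0" and "\<eta> > 0"
    and "\<beta> > 0" and "\<beta> \<le> - p / 2" and "\<beta> * (- p) \<le> q * w / 2"
  defines "\<epsilon> \<equiv> \<beta> * q * \<eta> / (8 * \<sigma>^2)"
  defines "k \<equiv> (1 + 2 * (w * g + \<beta> * h)^2 / (- w * p) + 2 * (\<beta> * g + q * h)^2 / (\<beta> * q)
      + \<epsilon> * \<sigma>^2 / \<eta>) / (- \<mu>)"
  defines "\<kappa> \<equiv> min (min (- w * p / 8) (\<beta> * q / 4)) (min (\<epsilon> * \<eta> / 2) 1)"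
  shows "inner (E2_lyapunov_map w \<beta> q k \<epsilon> y) (E2_jacobian p g q \<mu> w h \<sigma> \<eta> y) \<le> - \<kappa> * (norm y)^2"
proof (cases y rule: prod_cases4)
  case (fields x s i a)
  define A C1 C2 where "A = - w * p" and "C1 = w * g + \<beta> * h" and "C2 = \<beta> * g + q * h"
  have "A > 0" using \<open>w > 0\<close> \<open>p < 0\<close> by (simp add: A_def mult_pos_neg)
  have "\<beta> * q > 0" using \<open>\<beta> > 0\<close> \<open>q > 0\<close> by simp
  have "\<epsilon> > 0" using \<open>\<beta> * q > 0\<close> \<open>\<sigma> > 0\<close> \<open>\<eta> > 0\<close> by (simp add: \<epsilon>_def)
  have block: "w * (p + \<beta>) * x^2 + x * (\<beta> * p * i) - \<beta> * q * i^2 \<le> - (A / 4) * x^2 - \<beta> * q / 2 * i^2"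
    using E2_prey_infected_block_bound assms(1,3,7-9) by (simp add: A_def)
  have "x * (C1 * s) \<le> A / 8 * x^2 + 2 * C1^2 / A * s^2"
    using product_le_weighted_squares[of "A / 4" x "C1 * s"] \<open>A > 0\<close>
    by (simp add: power_mult_distrib field_simps)
  moreover have "i * (C2 * s) \<le> \<beta> * q / 8 * i^2 + 2 * C2^2 / (\<beta> * q) * s^2"
    using product_le_weighted_squares[of "\<beta> * q / 4" i "C2 * s"] \<open>\<beta> * q > 0\<close>
    by (simp add: power_mult_distrib field_simps)
  moreover have "i * (\<epsilon> * \<sigma> * a) \<le> \<beta> * q / 8 * i^2 + \<epsilon> * \<eta> / 4 * a^2"
  proof -
    have "i * (\<epsilon> * \<sigma> * a) \<le> (\<beta> * q / 4 * i^2 + (\<epsilon> * \<sigma> * a)^2 / (\<beta> * q / 4)) / 2"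
      using \<open>\<beta> * q > 0\<close> by (intro product_le_weighted_squares) simp
    also have "(\<epsilon> * \<sigma> * a)^2 / (\<beta> * q / 4) = \<epsilon> * \<eta> / 2 * a^2"
      using \<open>\<beta> * q > 0\<close> \<open>\<sigma> > 0\<close> by (simp add: \<epsilon>_def power2_eq_square field_simps)
    finally show ?thesis by (simp add: field_simps)
  qed
  moreover have "a * (\<epsilon> * \<sigma> * s) \<le> \<epsilon> * \<eta> / 4 * a^2 + \<epsilon> * \<sigma>^2 / \<eta> * s^2"
    using product_le_weighted_squares[of "\<epsilon> * \<eta> / 2" a "\<epsilon> * \<sigma> * s"] \<open>\<epsilon> > 0\<close> \<open>\<eta> > 0\<close>
    by (simp add: power_mult_distrib power2_eq_square field_simps)
  ultimately have "inner (E2_lyapunov_map w \<beta> q k \<epsilon> y) (E2_jacobian p g q \<mu> w h \<sigma> \<eta> y) \<le>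
      - (A / 8) * x^2 - (\<beta> * q / 4) * i^2 - (\<epsilon> * \<eta> / 2) * a^2
      + (k * \<mu> + 2 * C1^2 / A + 2 * C2^2 / (\<beta> * q) + \<epsilon> * \<sigma>^2 / \<eta>) * s^2"
    using block unfolding fields inner_E2_lyapunov_map_E2_jacobian C1_def[symmetric] C2_def[symmetric]
    by (simp add: algebra_simps)
  also have "k * \<mu> + 2 * C1^2 / A + 2 * C2^2 / (\<beta> * q) + \<epsilon> * \<sigma>^2 / \<eta> = -1"
    using \<open>\<mu> < 0\<close> by (simp add: k_def A_def C1_def C2_def field_simps)
  also have "\<kappa> * x^2 \<le> A / 8 * x^2" "\<kappa> * i^2 \<le> \<beta> * q / 4 * i^2" "\<kappa> * a^2 \<le> \<epsilon> * \<eta> / 2 * a^2"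
    "\<kappa> * s^2 \<le> 1 * s^2"
    by (intro mult_right_mono; simp add: \<kappa>_def A_def)+
  then have "- (A / 8) * x^2 - (\<beta> * q / 4) * i^2 - (\<epsilon> * \<eta> / 2) * a^2 + -1 * s^2
      \<le> - \<kappa> * (norm y)^2"
    by (simp add: fields norm_state_squared algebra_simps)
  finally show ?thesis .
qed

lemma E2_jacobian_quadratic_lyapunov:
  fixes p g q \<mu> w h \<sigma> \<eta> :: real
  assumes "p < 0" and "q > 0" and "w > 0" and "\<mu> < 0" and "\<sigma> > 0" and "\<eta> > 0"
  obtains P :: "state \<Rightarrow> state" and m \<kappa> :: real
  where "linear P" and "\<And>y v. inner (P y) v = inner y (P v)"
    and "m > 0" and "\<And>y. m * (norm y)^2 \<le> inner y (P y)"
    and "\<kappa> > 0" and "\<And>y. inner (P y) (E2_jacobian p g q \<mu> w h \<sigma> \<eta> y) \<le> - \<kappa> * (norm y)^2"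
proof -
  obtain \<beta> where \<beta>: "\<beta> > 0" "\<beta> \<le> - p / 2" "\<beta> * (- p) \<le> q * w / 2" "\<beta>^2 \<le> w * q / 4"
    using E2_lyapunov_weight assms(1-3) by blast
  define \<epsilon> where "\<epsilon> = \<beta> * q * \<eta> / (8 * \<sigma>^2)"
  define k where "k = (1 + 2 * (w * g + \<beta> * h)^2 / (- w * p) + 2 * (\<beta> * g + q * h)^2 / (\<beta> * q)
      + \<epsilon> * \<sigma>^2 / \<eta>) / (- \<mu>)"
  define \<kappa> where "\<kappa> = min (min (- w * p / 8) (\<beta> * q / 4)) (min (\<epsilon> * \<eta> / 2) 1)"
  have "\<epsilon> > 0" using assms \<beta> by (simp add: \<epsilon>_def)
  have "- w * p > 0" using assms by (simp add: mult_pos_neg)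
  then have "2 * (w * g + \<beta> * h)^2 / (- w * p) \<ge> 0" by (intro divide_nonneg_pos) auto
  moreover have "2 * (\<beta> * g + q * h)^2 / (\<beta> * q) \<ge> 0" "\<epsilon> * \<sigma>^2 / \<eta> > 0"
    using assms \<beta> \<open>\<epsilon> > 0\<close> by simp_all
  ultimately have "k > 0" using \<open>\<mu> < 0\<close> unfolding k_def by (intro divide_pos_pos) auto
  have "\<kappa> > 0" using \<open>- w * p > 0\<close> \<open>\<epsilon> > 0\<close> \<beta> assms by (simp add: \<kappa>_def)
  show ?thesis
  proof (rule that)
    show "linear (E2_lyapunov_map w \<beta> q k \<epsilon>)" by (rule linear_E2_lyapunov_map)
    show "inner (E2_lyapunov_map w \<beta> q k \<epsilon> y) v = inner y (E2_lyapunov_map w \<beta> q k \<epsilon> v)" for y v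
      by (rule E2_lyapunov_map_symmetric)
    show "min (min (w / 2) (q / 2)) (min k \<epsilon>) > 0" using assms \<open>k > 0\<close> \<open>\<epsilon> > 0\<close> by simp
    show "min (min (w / 2) (q / 2)) (min k \<epsilon>) * (norm y)^2 \<le> inner y (E2_lyapunov_map w \<beta> q k \<epsilon> y)"
      for y using assms \<open>k > 0\<close> \<open>\<epsilon> > 0\<close> \<beta> by (intro E2_lyapunov_map_coercive)
    show "inner (E2_lyapunov_map w \<beta> q k \<epsilon> y) (E2_jacobian p g q \<mu> w h \<sigma> \<eta> y) \<le> - \<kappa> * (norm y)^2"
      for y unfolding \<epsilon>_def k_def \<kappa>_def using assms \<beta> by (intro E2_jacobian_lyapunov_estimate)
  qed fact
qed

lemma loc_asym_stable_of_E2_jacobian: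
  assumes "F e = 0" and "(F has_derivative E2_jacobian p g q \<mu> w h \<sigma> \<eta>) (at e)"
    and "p < 0" and "q > 0" and "w > 0" and "\<mu> < 0" and "\<sigma> > 0" and "\<eta> > 0"
  shows "loc_asym_stable F e"
proof -
  obtain P m \<kappa> where "linear P" "\<And>y v. inner (P y) v = inner y (P v)"
    and "m > 0" "\<And>y. m * (norm y)^2 \<le> inner y (P y)"
    and "\<kappa> > 0" "\<And>y. inner (P y) (E2_jacobian p g q \<mu> w h \<sigma> \<eta> y) \<le> - \<kappa> * (norm y)^2"
    using E2_jacobian_quadratic_lyapunov assms(3-8) by metis
  with assms(1,2) show ?thesis by (rule loc_asym_stable_by_linearization)
qed

lemma pest_field_has_derivative_E2:
  assumes "c + X \<noteq> 0" and "a + A \<noteq> 0" and "K \<noteq> 0"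
    and balance: "m2 * \<phi> * \<alpha> * X = (d + \<delta>) * (c + X)"
  shows "(pest_field r K \<alpha> \<phi> c m1 m2 lam a d \<delta> \<gamma> \<sigma> \<eta> has_derivative
    E2_jacobian (r * (1 - 2 * X / K) - \<phi> * \<alpha> * c * I / (c + X)^2) (- (\<alpha> * X / (c + X)))
      (\<phi> * \<alpha> * X / (c + X)) (m1 * \<alpha> * X / (c + X) - lam * A / (a + A) - d)
      (m2 * \<phi> * \<alpha> * c * I / (c + X)^2) (lam * A / (a + A)) \<sigma> \<eta>) (at (X, 0, I, A))"
proof -
  define z u where "z = c + X" and "u = a + A"
  have "z \<noteq> 0" "u \<noteq> 0" and X: "X = z - c" and A: "A = u - a"
    using assms(1,2) by (simp_all add: z_def u_def)
  have \<delta>: "\<delta> = m2 * \<phi> * \<alpha> * (z - c) / z - d"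
    using balance \<open>z \<noteq> 0\<close> by (simp add: X field_simps)
  show ?thesis
    unfolding pest_field_def case_prod_unfold X A
    apply (rule has_derivative_eq_rhs)
     apply (rule derivative_eq_intros refl | (simp add: \<open>z \<noteq> 0\<close> \<open>u \<noteq> 0\<close> \<open>K \<noteq> 0\<close>; fail))+
    apply (rule ext)
    subgoal for v
      using \<open>z \<noteq> 0\<close> \<open>u \<noteq> 0\<close> \<open>K \<noteq> 0\<close>
      by (cases v rule: prod_cases4) (simp add: E2_jacobian_def \<delta> field_simps power2_eq_square)
    done
qed

lemma pest_field_E2_eq_0:
  assumes "c + X \<noteq> 0" and "K \<noteq> 0" and "\<phi> * \<alpha> \<noteq> 0" and "\<eta> \<noteq> 0"
    and balance: "m2 * \<phi> * \<alpha> * X = (d + \<delta>) * (c + X)"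
    and I: "I = r * (c + X) * (K - X) / (\<phi> * \<alpha> * K)"
    and A: "A = (\<gamma> + \<sigma> * I) / \<eta>"
  shows "pest_field r K \<alpha> \<phi> c m1 m2 lam a d \<delta> \<gamma> \<sigma> \<eta> (X, 0, I, A) = 0"
proof -
  define z where "z = c + X"
  have "z \<noteq> 0" and I_z: "I = r * z * (K - X) / (\<phi> * \<alpha> * K)"
    using assms(1) by (simp_all add: z_def I)
  then have "\<phi> * \<alpha> * X * I / z = r * X * (1 - X / K)"
    using assms(2,3) by (simp add: I_z field_simps)
  moreover have "m2 * \<phi> * \<alpha> * X * I / (c + X) = (d + \<delta>) * I"
    using assms(1) by (simp add: balance)
  moreover have "\<eta> * A = \<gamma> + \<sigma> * I" using assms(4) by (simp add: A)
  ultimately show ?thesis by (simp add: pest_field_def zero_prod_def z_def)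
qed

lemma E2_prey_equilibrium:
  fixes c K \<theta> P :: real
  assumes "c > 0" and "K > 0" and "\<theta> > 0" and "\<theta> < P * K / (c + K)"
  defines "X \<equiv> c * \<theta> / (P - \<theta>)"
  shows "0 < X" and "X < K" and "P * X = \<theta> * (c + X)"
proof -
  have threshold: "c * \<theta> < K * (P - \<theta>)"
    using assms(1-4) by (simp add: pos_less_divide_eq algebra_simps)
  moreover have "0 < c * \<theta>" using assms(1,3) by simp
  ultimately have "0 < K * (P - \<theta>)" by linarith
  then have "P - \<theta> > 0" using \<open>K > 0\<close> zero_less_mult_pos by blast
  then show "0 < X" and "X < K" and "P * X = \<theta> * (c + X)"
    using assms(1,3) threshold by (simp_all add: X_def pos_divide_less_eq field_simps)
qed

lemma E2_K_minus_c_less_twice_prey: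
  fixes c K \<alpha> \<nu> \<theta> X :: real
  assumes "c > 0" and "\<alpha> > 0" and "\<theta> > 0" and "X > 0"
    and balance: "\<nu> * \<alpha> * X = \<theta> * (c + X)"
    and upper: "\<nu> < (K + c) * \<theta> / (\<alpha> * (K - c))"
  shows "K - c < 2 * X"
proof (cases "K \<le> c")
  case True
  then show ?thesis using \<open>X > 0\<close> by simp
next
  case False
  then have "\<nu> * \<alpha> * (K - c) < (K + c) * \<theta>"
    using upper \<open>\<alpha> > 0\<close> by (simp add: pos_less_divide_eq mult.assoc)
  moreover have gap: "X * (\<nu> * \<alpha> - \<theta>) = c * \<theta>" using balance by (simp add: algebra_simps)
  ultimately have "(K - c) * (\<nu> * \<alpha> - \<theta>) < 2 * X * (\<nu> * \<alpha> - \<theta>)"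
    by (simp add: algebra_simps)
  moreover have "\<nu> * \<alpha> - \<theta> > 0"
    using gap assms(1,3,4) by (metis mult_pos_pos zero_less_mult_pos)
  ultimately show ?thesis by simp
qed

lemma E2_prey_coefficient_neg:
  fixes r K c \<phi> \<alpha> X I :: real
  assumes "r > 0" and "K > 0" and "c > 0" and "\<phi> * \<alpha> \<noteq> 0" and "X > 0" and "K - c < 2 * X"
    and I: "I = r * (c + X) * (K - X) / (\<phi> * \<alpha> * K)"
  shows "r * (1 - 2 * X / K) - \<phi> * \<alpha> * c * I / (c + X)^2 < 0"
proof -
  define z where "z = c + X"
  have "z > 0" and I_z: "I = r * z * (K - X) / (\<phi> * \<alpha> * K)" and c_z: "c = z - X"
    using assms(3,5) by (simp_all add: z_def I)
  then have "r * (1 - 2 * X / K) - \<phi> * \<alpha> * c * I / z^2 = r * X * (K - c - 2 * X) / (K * z)"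
    using assms(2,4) by (simp add: I_z c_z field_simps power2_eq_square)
  moreover have "r * X * (K - c - 2 * X) < 0" using assms(1,5,6) by (simp add: mult_pos_neg)
  ultimately show ?thesis using \<open>K > 0\<close> \<open>z > 0\<close> by (simp add: z_def divide_neg_pos)
qed

lemma E2_susceptible_coefficient_neg:
  fixes m1 \<alpha> \<nu> \<theta> c X lam a A d :: real
  assumes "a > 0" and "A > 0" and "lam > 0" and "d > 0" and "\<nu> > 0" and "c + X > 0"
    and balance: "\<nu> * \<alpha> * X = \<theta> * (c + X)"
    and lower: "m1 * \<theta> * (a + A) / ((a + A) * (lam + d) - lam * a) < \<nu>"
  shows "m1 * \<alpha> * X / (c + X) - lam * A / (a + A) - d < 0"
proof -
  have den: "(a + A) * (lam + d) - lam * a = (a + A) * (lam * A / (a + A) + d)"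
    using assms(1,2) by (simp add: field_simps)
  have "lam * A / (a + A) + d > 0" using assms(1-4) by (simp add: add_pos_pos)
  then have "m1 * \<theta> < \<nu> * (lam * A / (a + A) + d)"
    using lower assms(1,2) unfolding den by (simp add: pos_divide_less_eq mult_ac)
  moreover have "\<nu> * (m1 * \<alpha> * X / (c + X)) = m1 * \<theta>"
  proof -
    have "\<nu> * (m1 * \<alpha> * X / (c + X)) = m1 * (\<nu> * \<alpha> * X) / (c + X)" by (simp add: mult_ac)
    then show ?thesis using balance assms(6) by simp
  qed
  ultimately have "\<nu> * (m1 * \<alpha> * X / (c + X)) < \<nu> * (lam * A / (a + A) + d)" by simp
  then have "m1 * \<alpha> * X / (c + X) < lam * A / (a + A) + d"
    using mult_less_cancel_left_pos[OF \<open>\<nu> > 0\<close>] by blast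
  then show ?thesis by simp
qed

theorem theorem4:
  fixes r K \<alpha> \<phi> c m1 m2 lam a d \<delta> \<gamma> \<sigma> \<eta> :: real
  assumes pos: "r > 0" "K > 0" "\<alpha> > 0" "\<phi> > 0" "c > 0" "m1 > 0" "m2 > 0" "lam > 0"
      "a > 0" "d > 0" "\<delta> > 0" "\<gamma> > 0" "\<sigma> > 0" "\<eta> > 0"
    and "\<phi> < 1" and "m1 > m2"
    and E2_ex: "d + \<delta> < m2 * \<phi> * \<alpha> * K / (c + K)"
  defines "Xb \<equiv> c * (d + \<delta>) / (m2 * \<phi> * \<alpha> - (d + \<delta>))"
  defines "Ib \<equiv> r * (c + Xb) * (K - Xb) / (\<phi> * \<alpha> * K)"
  defines "Ab \<equiv> (\<gamma> + \<sigma> * Ib) / \<eta>"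
  assumes cond_low: "m1 * (d + \<delta>) * (a + Ab) / ((a + Ab) * (lam + d) - lam * a) < m2 * \<phi>"
    and cond_up: "m2 * \<phi> < (K + c) * (d + \<delta>) / (\<alpha> * (K - c))"
  shows "loc_asym_stable (pest_field r K \<alpha> \<phi> c m1 m2 lam a d \<delta> \<gamma> \<sigma> \<eta>) (Xb, 0, Ib, Ab)"
proof -
  have "d + \<delta> > 0" using pos by simp
  have Xb: "0 < Xb" "Xb < K" and balance: "m2 * \<phi> * \<alpha> * Xb = (d + \<delta>) * (c + Xb)"
    using E2_prey_equilibrium[OF pos(5,2) \<open>d + \<delta> > 0\<close> E2_ex] unfolding Xb_def by simp_all
  have "Ib > 0" using pos Xb by (simp add: Ib_def)
  then have "Ab > 0" using pos unfolding Ab_def by (intro divide_pos_pos add_pos_pos) auto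
  have equilibrium: "pest_field r K \<alpha> \<phi> c m1 m2 lam a d \<delta> \<gamma> \<sigma> \<eta> (Xb, 0, Ib, Ab) = 0"
    using pos Xb balance by (intro pest_field_E2_eq_0) (simp_all add: Ib_def Ab_def)
  show ?thesis
  proof (rule loc_asym_stable_of_E2_jacobian[OF equilibrium pest_field_has_derivative_E2])
    have "K - c < 2 * Xb"
      using E2_K_minus_c_less_twice_prey[OF pos(5,3) \<open>d + \<delta> > 0\<close> Xb(1) balance cond_up] .
    then show "r * (1 - 2 * Xb / K) - \<phi> * \<alpha> * c * Ib / (c + Xb)^2 < 0"
      using pos Xb(1) by (intro E2_prey_coefficient_neg) (auto simp: Ib_def)
    show "m1 * \<alpha> * Xb / (c + Xb) - lam * Ab / (a + Ab) - d < 0"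
      using pos Xb(1) \<open>Ab > 0\<close>
      by (intro E2_susceptible_coefficient_neg[OF _ _ _ _ _ _ balance cond_low]) auto
  qed (use pos Xb \<open>Ib > 0\<close> \<open>Ab > 0\<close> balance in auto)
qed

end
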